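(* For every $i\in\{1,\ldots,n\}$ the following implications are valid: (a) $\neg\hat F(\mathbf{1}^{i-1}0,\mathbf{X}_{i+1}^n,\mathbf{1}^{i},\neg\mathbf{X}_{i+1}^n,\mathbf{Y})\Rightarrow \Delta_i\Rightarrow \neg\hat F(\mathbf{0}^{i},\mathbf{X}_{i+1}^n,\mathbf{0}^{i-1}1,\neg\mathbf{X}_{i+1}^n,\mathbf{Y})$; (b) $\neg\hat F(\mathbf{1}^{i},\mathbf{X}_{i+1}^n,\mathbf{1}^{i-1}0,\neg\mathbf{X}_{i+1}^n,\mathbf{Y})\Rightarrow \Gamma_i\Rightarrow \neg\hat F(\mathbf{0}^{i-1}1,\mathbf{X}_{i+1}^n,\mathbf{0}^{i},\neg\mathbf{X}_{i+1}^n,\mathbf{Y})$.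
   Context: $\mathbf{X}=(x_1,\ldots,x_n)$ are outputs and $\mathbf{Y}=(y_1,\ldots,y_m)$ inputs; $\mathbf{X}_i^j=(x_i,\ldots,x_j)$. $\Delta_i(\mathbf{X}_{i+1}^n,\mathbf{Y})\equiv\neg\exists\mathbf{X}_1^{i-1}F(\mathbf{X}_1^{i-1},0,\mathbf{X}_{i+1}^n,\mathbf{Y})$ and $\Gamma_i(\mathbf{X}_{i+1}^n,\mathbf{Y})\equiv\neg\exists\mathbf{X}_1^{i-1}F(\mathbf{X}_1^{i-1},1,\mathbf{X}_{i+1}^n,\mathbf{Y})$ (the $0$/$1$ is in the position of $x_i$). An NNF formula uses only $\wedge,\vee$ and negations applied to variables, represented as a DAG with $\wedge/\vee$ internal nodes and literal leaves. Given a fixed NNF DAG for $F$, $\hat F(\mathbf{X},\overline{\mathbf{X}},\mathbf{Y})$ is obtained by replacing each leaf $\neg x_i$ ($x_i\in\mathbf{X}$) by a fresh variable $\overline{x_i}$. For bit-vectors $\mathbf{b},\mathbf{c}$ of length $i$, $\hat F(\mathbf{b},\mathbf{X}_{i+1}^n,\mathbf{c},\neg\mathbf{X}_{i+1}^n,\mathbf{Y})$ denotes $\hat F$ with $(x_1,\ldots,x_i):=\mathbf{b}$, $(\overline{x_1},\ldots,\overline{x_i}):=\mathbf{c}$ and $\overline{x_j}:=\neg x_j$ for $j>i$. $\mathbf{1}^{i-1}0$ denotes the length-$i$ vector with $i-1$ ones followed by a $0$, $\mathbf{0}^{i-1}1$ likewise; $\mathbf{0}^i,\mathbf{1}^i$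 are constant vectors. *)

theory Defs
  imports Main
begin

text \<open>NNF formulas over output variables x_j (j :: nat, meant 1..n) and input
variables of type 'y. Literals: Lit True v = v, Lit False v = negated v.
A DAG is semantically a formula tree, so a tree datatype is used.\<close>

datatype 'y nnf =
    LitX bool nat
  | LitY bool 'y
  | Conj "'y nnf" "'y nnf"
  | Disj "'y nnf" "'y nnf"

fun xvars :: "'y nnf \<Rightarrow> nat set" where
  "xvars (LitX b j) = {j}"
| "xvars (LitY b y) = {}"
| "xvars (Conj f g) = xvars f \<union> xvars g"
| "xvars (Disj f g) = xvars f \<union> xvars g"

fun eval :: "'y nnf \<Rightarrow> (nat \<Rightarrow> bool) \<Rightarrow> ('y \<Rightarrow> bool) \<Rightarrow> bool" where
  "eval (LitX b j) x y = (if b then x j else \<not> x j)"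
| "eval (LitY b v) x y = (if b then y v else \<not> y v)"
| "eval (Conj f g) x y = (eval f x y \<and> eval g x y)"
| "eval (Disj f g) x y = (eval f x y \<or> eval g x y)"

text \<open>Semantics of hat F(X, Xbar, Y): each leaf "not x_j" reads the fresh variable xbar_j.\<close>
fun evalHat :: "'y nnf \<Rightarrow> (nat \<Rightarrow> bool) \<Rightarrow> (nat \<Rightarrow> bool) \<Rightarrow> ('y \<Rightarrow> bool) \<Rightarrow> bool" where
  "evalHat (LitX b j) x xb y = (if b then x j else xb j)"
| "evalHat (LitY b v) x xb y = (if b then y v else \<not> y v)"
| "evalHat (Conj f g) x xb y = (evalHat f x xb y \<and> evalHat g x xb y)"
| "evalHat (Disj f g) x xb y = (evalHat f x xb y \<or> evalHat g x xb y)"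

text \<open>Assignment (X_1^{i-1}, c, X_{i+1}^n) := (z_1..z_{i-1}, c, x_{i+1}..x_n).\<close>
definition splice :: "nat \<Rightarrow> (nat \<Rightarrow> bool) \<Rightarrow> bool \<Rightarrow> (nat \<Rightarrow> bool) \<Rightarrow> nat \<Rightarrow> bool" where
  "splice i z c x = (\<lambda>j. if j < i then z j else if j = i then c else x j)"

definition Delta :: "'y nnf \<Rightarrow> nat \<Rightarrow> (nat \<Rightarrow> bool) \<Rightarrow> ('y \<Rightarrow> bool) \<Rightarrow> bool" where
  "Delta F i x y = (\<not> (\<exists>z. eval F (splice i z False x) y))"

definition Gamma :: "'y nnf \<Rightarrow> nat \<Rightarrow> (nat \<Rightarrow> bool) \<Rightarrow> ('y \<Rightarrow> bool) \<Rightarrow> bool" where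
  "Gamma F i x y = (\<not> (\<exists>z. eval F (splice i z True x) y))"

text \<open>hat F(b, X_{i+1}^n, c, not X_{i+1}^n, Y), where the length-i vectors b, c are
given as "value on 1..i-1" and "value at i".\<close>
definition hatSub :: "'y nnf \<Rightarrow> nat \<Rightarrow> bool \<Rightarrow> bool \<Rightarrow> bool \<Rightarrow> bool
     \<Rightarrow> (nat \<Rightarrow> bool) \<Rightarrow> ('y \<Rightarrow> bool) \<Rightarrow> bool" where
  "hatSub F i b0 bi c0 ci x y =
     evalHat F (splice i (\<lambda>_. b0) bi x) (splice i (\<lambda>_. c0) ci (\<lambda>j. \<not> x j)) y"

end

theory Submission
  imports Defs
begin

text \<open>Since F is in NNF, hat F is monotone in both X and Xbar, and F(X,Y) = hat F(X, \<not>X, Y).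
  Setting x_1..x_(i-1) and all their complements to true over-approximates every consistent
  assignment of X_1^(i-1), which gives the left implications; setting them all to false
  under-approximates the particular assignment X_1^(i-1) = 0, which gives the right ones.\<close>

lemma evalHat_mono:
  assumes "evalHat F x xb y" and "\<And>j. x j \<Longrightarrow> x' j" and "\<And>j. xb j \<Longrightarrow> xb' j"
  shows "evalHat F x' xb' y"
  using assms by (induction F) auto

lemma eval_eq_evalHat: "eval F x y = evalHat F x (\<lambda>j. \<not> x j) y"
  by (induction F) auto

lemma hatSub_upper:
  assumes "eval F (splice i z c x) y"
  shows "hatSub F i True c True (\<not> c) x y"
proof -
  have "evalHat F (splice i z c x) (\<lambda>j. \<not> splice i z c x j) y"
    using assms by (simp add: eval_eq_evalHat)
  then show ?thesis
    unfolding hatSub_def by (rule evalHat_mono) (auto simp: splice_def split: if_splits)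
qed

lemma hatSub_lower:
  assumes "hatSub F i False c False (\<not> c) x y"
  shows "eval F (splice i (\<lambda>_. False) c x) y"
proof -
  have "evalHat F (splice i (\<lambda>_. False) c x) (\<lambda>j. \<not> splice i (\<lambda>_. False) c x j) y"
    using assms unfolding hatSub_def by (rule evalHat_mono) (auto simp: splice_def)
  then show ?thesis by (simp add: eval_eq_evalHat)
qed

theorem lemma1:
  fixes F :: "'y nnf" and n i :: nat
  assumes "xvars F \<subseteq> {1..n}" and "1 \<le> i" and "i \<le> n"
  shows "(\<forall>x y. \<not> hatSub F i True False True True x y \<longrightarrow> Delta F i x y)
       \<and> (\<forall>x y. Delta F i x y \<longrightarrow> \<not> hatSub F i False False False True x y)
       \<and> (\<forall>x y. \<not> hatSub F i True True True False x y \<longrightarrow> Gamma F i x y)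
       \<and> (\<forall>x y. Gamma F i x y \<longrightarrow> \<not> hatSub F i False True False False x y)"
  using hatSub_upper[of F i _ False, simplified] hatSub_lower[of F i False, simplified]
    hatSub_upper[of F i _ True, simplified] hatSub_lower[of F i True, simplified]
  unfolding Delta_def Gamma_def by blast

end
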